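(* Let $N$ be a phylogenetic network on $X\subseteq[n]$ and let $(i,j)$ be a reducible pair in $N$. Then $\boldsymbol\mu(N^{(i,j)})=\boldsymbol\mu(N)^{(i,j)}$ as multisets, where $\boldsymbol\mu(N)^{(i,j)}$ is the cherry-reduction of $\boldsymbol\mu(N)$ if $(i,j)$ is a cherry of $N$ and the reticulated-cherry-reduction of $\boldsymbol\mu(N)$ if $(i,j)$ is a reticulated-cherry of $N$.
   Context: A (binary) phylogenetic network on a finite set $X\subseteq[n]=\{1,\dots,n\}$ is a directed acyclic graph $N=(V,A)$ without parallel arcs in which every node is exactly one of: the root (indegree 0, outdegree 1; there is exactly one), a leaf (indegree 1, outdegree 0), a tree node (indegree 1, outdegree 2), or a reticulation (indegree 2, outdegree 1); the leaves are identified with the elements of $X$. $V_T(N)$ denotes the set of leaves and tree nodes, $V_H(N)$ the set of reticulations. $m(u,v)$ is the number of directed paths from $u$ to $v$ (trivial paths allowed). Extended $\mu$-vectors: $\mu_i(u)=m(u,i)$ for $i\in[n]$ (0 if $i\notin X$), $\mu_0(u)=\sum_{h\in V_H(N)} m(u,h)$, $\mu(u)=(\mu_0(u),\dots,\mu_n(u))$; $\boldsymbol\mu(N)$ is the multiset $\{\mu(u)\mid u\in V_T(N)\}$ (with multiplicities). $\delta_S$ is the 0/1 indicator vector of $S\subseteq\{0,\dots,n\}$ and $\delta_{j_1,\dots,j_k}=\delta_{\{j_1,\dots,j_k\}}$. For distinct leaves $i,j$ with parents $p_i,p_j$: $(i,j)$ is a cherry of $N$ if $p_i=p_j$; a reticulated-cherry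 of $N$ if $p_i$ is a reticulation, $p_j$ is a tree node and $p_j$ is a parent of $p_i$; reducible if either. Suppressing a node with indegree 1 and outdegree 1 means deleting it and its two arcs and adding an arc from its parent to its child. The reduction $N^{(i,j)}$: if $(i,j)$ is a cherry, delete leaf $i$ and its incoming arc, then suppress $p_i$; if it is a reticulated-cherry, delete the arc $p_jp_i$ and suppress $p_i$ and $p_j$. The result is a network on $X\setminus\{i\}$ in the first case and on $X$ in the second. For a finite multiset $\boldsymbol\mu$ of vectors of nonnegative integers indexed by $0,\dots,n$: the cherry-reduction with respect to $(i,j)$ is the multiset $\{\mu-\mu_i\delta_i \mid \mu\in\boldsymbol\mu\setminus\{\delta_i,\delta_{i,j}\}\}$ (one copy of $\delta_i$ and of $\delta_{i,j}$ removed); the reticulated-cherry-reduction with respect to $(i,j)$ is the multiset $\{\mu-\mu_i\delta_0-\mu_j\delta_i\mid \mu\in\boldsymbol\mu\setminus\{\delta_{0,i,j}\}\}$ (one copy of $\delta_{0,i,j}$ removed), where $\mu=(\mu_0,\dots,\mu_n)$. *)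

theory Defs
  imports Main "HOL-Library.Multiset"
begin

(* Networks: nodes are natural numbers, leaves are literally the labels in X \<subseteq> {1..n};
   arcs form a multiset (so that reductions, which may in degenerate cases create
   parallel arcs, are still represented faithfully for path counting). *)

definition indeg :: "(nat \<times> nat) multiset \<Rightarrow> nat \<Rightarrow> nat" where
  "indeg A v = size (filter_mset (\<lambda>e. snd e = v) A)"

definition outdeg :: "(nat \<times> nat) multiset \<Rightarrow> nat \<Rightarrow> nat" where
  "outdeg A v = size (filter_mset (\<lambda>e. fst e = v) A)"

definition is_root :: "(nat \<times> nat) multiset \<Rightarrow> nat \<Rightarrow> bool" where
  "is_root A v \<longleftrightarrow> indeg A v = 0 \<and> outdeg A v = 1"
definition is_leaf :: "(nat \<times> nat) multiset \<Rightarrow> nat \<Rightarrow> bool" where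
  "is_leaf A v \<longleftrightarrow> indeg A v = 1 \<and> outdeg A v = 0"
definition is_tree_node :: "(nat \<times> nat) multiset \<Rightarrow> nat \<Rightarrow> bool" where
  "is_tree_node A v \<longleftrightarrow> indeg A v = 1 \<and> outdeg A v = 2"
definition is_retic :: "(nat \<times> nat) multiset \<Rightarrow> nat \<Rightarrow> bool" where
  "is_retic A v \<longleftrightarrow> indeg A v = 2 \<and> outdeg A v = 1"

definition leaves :: "nat set \<Rightarrow> (nat \<times> nat) multiset \<Rightarrow> nat set" where
  "leaves V A = {v \<in> V. is_leaf A v}"
definition VT :: "nat set \<Rightarrow> (nat \<times> nat) multiset \<Rightarrow> nat set" where
  "VT V A = {v \<in> V. is_leaf A v \<or> is_tree_node A v}"
definition VH :: "nat set \<Rightarrow> (nat \<times> nat) multiset \<Rightarrow> nat set" where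
  "VH V A = {v \<in> V. is_retic A v}"

definition phylo_network :: "nat \<Rightarrow> nat set \<Rightarrow> (nat \<times> nat) multiset \<Rightarrow> nat set \<Rightarrow> bool" where
  "phylo_network n V A X \<longleftrightarrow>
     finite V \<and> set_mset A \<subseteq> V \<times> V \<and> (\<forall>e. count A e \<le> 1) \<and> acyclic (set_mset A) \<and>
     (\<exists>!r. r \<in> V \<and> is_root A r) \<and>
     (\<forall>v\<in>V. is_root A v \<or> is_leaf A v \<or> is_tree_node A v \<or> is_retic A v) \<and>
     leaves V A = X \<and> X \<subseteq> {1..n}"

definition npaths :: "nat set \<Rightarrow> (nat \<times> nat) multiset \<Rightarrow> nat \<Rightarrow> nat \<Rightarrow> nat" where
  "npaths V A u v = (\<Sum>xs \<in> {xs. xs \<noteq> [] \<and> hd xs = u \<and> last xs = v \<and> distinct xs \<and> set xs \<subseteq> V}.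
       prod_list (map (count A) (zip xs (tl xs))))"

(* extended mu-vector, indexed 0..n, as a function nat \<Rightarrow> nat (zero beyond n) *)
definition mu :: "nat \<Rightarrow> nat set \<Rightarrow> (nat \<times> nat) multiset \<Rightarrow> nat \<Rightarrow> nat \<Rightarrow> nat" where
  "mu n V A u = (\<lambda>k. if k = 0 then (\<Sum>h \<in> VH V A. npaths V A u h)
                     else if k \<le> n \<and> k \<in> leaves V A then npaths V A u k else 0)"

definition mu_multiset :: "nat \<Rightarrow> nat set \<Rightarrow> (nat \<times> nat) multiset \<Rightarrow> (nat \<Rightarrow> nat) multiset" where
  "mu_multiset n V A = image_mset (mu n V A) (mset_set (VT V A))"

definition delta :: "nat set \<Rightarrow> nat \<Rightarrow> nat" where
  "delta S = (\<lambda>k. if k \<in> S then 1 else 0)"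

definition cherry_red_ms :: "(nat \<Rightarrow> nat) multiset \<Rightarrow> nat \<Rightarrow> nat \<Rightarrow> (nat \<Rightarrow> nat) multiset" where
  "cherry_red_ms M i j =
     image_mset (\<lambda>m k. m k - m i * delta {i} k) (M - {#delta {i}, delta {i, j}#})"

definition retic_red_ms :: "(nat \<Rightarrow> nat) multiset \<Rightarrow> nat \<Rightarrow> nat \<Rightarrow> (nat \<Rightarrow> nat) multiset" where
  "retic_red_ms M i j =
     image_mset (\<lambda>m k. m k - m i * delta {0} k - m j * delta {i} k) (M - {#delta {0, i, j}#})"

definition parent :: "(nat \<times> nat) multiset \<Rightarrow> nat \<Rightarrow> nat" where
  "parent A v = (SOME p. (p, v) \<in># A)"

definition child :: "(nat \<times> nat) multiset \<Rightarrow> nat \<Rightarrow> nat" where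
  "child A v = (SOME c. (v, c) \<in># A)"

definition suppress :: "nat set \<Rightarrow> (nat \<times> nat) multiset \<Rightarrow> nat \<Rightarrow> nat set \<times> (nat \<times> nat) multiset" where
  "suppress V A v = (let p = parent A v; c = child A v in
      (V - {v}, A - {#(p, v), (v, c)#} + {#(p, c)#}))"

definition is_cherry :: "nat set \<Rightarrow> (nat \<times> nat) multiset \<Rightarrow> nat \<Rightarrow> nat \<Rightarrow> bool" where
  "is_cherry V A i j \<longleftrightarrow> i \<noteq> j \<and> i \<in> leaves V A \<and> j \<in> leaves V A \<and> parent A i = parent A j"

definition is_retic_cherry :: "nat set \<Rightarrow> (nat \<times> nat) multiset \<Rightarrow> nat \<Rightarrow> nat \<Rightarrow> bool" where
  "is_retic_cherry V A i j \<longleftrightarrow> i \<noteq> j \<and> i \<in> leaves V A \<and> j \<in> leaves V A \<and>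
     is_retic A (parent A i) \<and> is_tree_node A (parent A j) \<and> (parent A j, parent A i) \<in># A"

definition cherry_reduce :: "nat set \<Rightarrow> (nat \<times> nat) multiset \<Rightarrow> nat \<Rightarrow> nat \<Rightarrow> nat set \<times> (nat \<times> nat) multiset" where
  "cherry_reduce V A i j = suppress (V - {i}) (A - {#(parent A i, i)#}) (parent A i)"

definition retic_reduce :: "nat set \<Rightarrow> (nat \<times> nat) multiset \<Rightarrow> nat \<Rightarrow> nat \<Rightarrow> nat set \<times> (nat \<times> nat) multiset" where
  "retic_reduce V A i j =
     (let VA1 = suppress V (A - {#(parent A j, parent A i)#}) (parent A i)
      in suppress (fst VA1) (snd VA1) (parent A j))"

definition net_reduce :: "nat set \<Rightarrow> (nat \<times> nat) multiset \<Rightarrow> nat \<Rightarrow> nat \<Rightarrow> nat set \<times> (nat \<times> nat) multiset" where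
  "net_reduce V A i j = (if is_cherry V A i j then cherry_reduce V A i j else retic_reduce V A i j)"

definition mu_reduce :: "nat set \<Rightarrow> (nat \<times> nat) multiset \<Rightarrow> nat \<Rightarrow> nat \<Rightarrow> (nat \<Rightarrow> nat) multiset \<Rightarrow> (nat \<Rightarrow> nat) multiset" where
  "mu_reduce V A i j M = (if is_cherry V A i j then cherry_red_ms M i j else retic_red_ms M i j)"

end

theory Submission
  imports Defs
begin

text \<open>Both reductions are compositions of three local operations: deleting a leaf, deleting an
  arc, and suppressing a node of in- and outdegree one. Leaf deletion and suppression preserve the
  number of paths between all surviving nodes; deleting the arc from the tree node \<open>t\<close> to the
  reticulation \<open>r\<close> of a reticulated cherry removes from \<open>m(u, i)\<close> exactly the \<open>m(u, t) = m(u, j)\<close>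
  paths through it. Each such identity follows from the recurrence
  \<open>m(u, v) = \<Sigma>\<^sub>w count A (w, v) * m(u, w)\<close>, which determines path counts in a finite acyclic
  multigraph. Surviving nodes keep their degrees, hence their type, so the new \<mu>-vectors are the
  reduced old ones, and the removed tree nodes contribute precisely the vectors deleted from the
  multiset: \<open>delta {i}\<close> and \<open>delta {i, j}\<close> for a cherry, \<open>delta {0, i, j}\<close> for a reticulated
  cherry.\<close>

section \<open>Counting paths in finite acyclic multigraphs\<close>

definition finite_dag :: "nat set \<Rightarrow> (nat \<times> nat) multiset \<Rightarrow> bool" where
  "finite_dag V A \<longleftrightarrow> finite V \<and> set_mset A \<subseteq> V \<times> V \<and> acyclic (set_mset A)"

abbreviation path_weight :: "(nat \<times> nat) multiset \<Rightarrow> nat list \<Rightarrow> nat" where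
  "path_weight A xs \<equiv> prod_list (map (count A) (zip xs (tl xs)))"

definition simple_paths_from :: "nat set \<Rightarrow> nat \<Rightarrow> nat list set" where
  "simple_paths_from V u = {xs. xs \<noteq> [] \<and> hd xs = u \<and> distinct xs \<and> set xs \<subseteq> V}"

definition simple_paths :: "nat set \<Rightarrow> nat \<Rightarrow> nat \<Rightarrow> nat list set" where
  "simple_paths V u v = {xs \<in> simple_paths_from V u. last xs = v}"

lemma npaths_eq_sum_simple_paths: "npaths V A u v = (\<Sum>xs\<in>simple_paths V u v. path_weight A xs)"
  unfolding npaths_def simple_paths_def simple_paths_from_def by (simp add: conj_ac)

lemma finite_simple_paths_from: "finite V \<Longrightarrow> finite (simple_paths_from V u)"
  unfolding simple_paths_from_def
  by (rule finite_subset[OF _ finite_subset_distinct]) auto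

lemma path_weight_snoc:
  "path_weight A (a # xs @ [v]) = path_weight A (a # xs) * count A (last (a # xs), v)"
  by (induction xs arbitrary: a) auto

lemma path_weight_nonzero_imp_rtrancl:
  assumes "path_weight A xs \<noteq> 0" "x \<in> set xs"
  shows "(x, last xs) \<in> (set_mset A)\<^sup>*"
  using assms
proof (induction xs arbitrary: x)
  case (Cons a xs)
  show ?case
  proof (cases xs)
    case (Cons b ys)
    with Cons.prems have "(a, b) \<in># A" "path_weight A xs \<noteq> 0"
      by (auto simp: count_eq_zero_iff)
    with Cons.IH \<open>xs = b # ys\<close> have "(y, last xs) \<in> (set_mset A)\<^sup>*" if "y \<in> set xs" for y
      using that by blast
    with \<open>(a, b) \<in># A\<close> \<open>xs = b # ys\<close> Cons.prems(2) show ?thesis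
      by (auto intro: converse_rtrancl_into_rtrancl)
  qed (use Cons.prems in simp)
qed simp

lemma npaths_nonzero_imp_rtrancl:
  assumes "npaths V A u v \<noteq> 0"
  shows "(u, v) \<in> (set_mset A)\<^sup>*"
proof -
  obtain xs where "xs \<in> simple_paths V u v" "path_weight A xs \<noteq> 0"
    using assms unfolding npaths_eq_sum_simple_paths by (meson sum.not_neutral_contains_not_neutral)
  then show ?thesis
    using path_weight_nonzero_imp_rtrancl[of A xs "hd xs"]
    unfolding simple_paths_def simple_paths_from_def by auto
qed

lemma npaths_self:
  assumes "v \<in> V"
  shows "npaths V A v v = 1"
proof -
  have "xs = [v]" if "xs \<noteq> []" "distinct xs" "hd xs = v" "last xs = v" for xs
    using that by (cases xs) (auto split: if_splits)
  then have "simple_paths V v v = {[v]}"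
    using assms unfolding simple_paths_def simple_paths_from_def by auto
  then show ?thesis unfolding npaths_eq_sum_simple_paths by simp
qed

lemma sum_simple_paths_eq_sum_snoc:
  assumes "v \<in> V" "u \<noteq> v"
  shows "(\<Sum>xs\<in>simple_paths V u v. path_weight A xs)
    = (\<Sum>ys\<in>{ys \<in> simple_paths_from V u. v \<notin> set ys}. count A (last ys, v) * path_weight A ys)"
proof (rule sym, rule sum.reindex_bij_witness[where i = butlast and j = "\<lambda>ys. ys @ [v]"])
  fix ys assume ys: "ys \<in> {ys \<in> simple_paths_from V u. v \<notin> set ys}"
  then show "butlast (ys @ [v]) = ys" "ys @ [v] \<in> simple_paths V u v"
    using assms(1) by (auto simp: simple_paths_def simple_paths_from_def)
  from ys obtain a zs where "ys = a # zs" by (cases ys) (auto simp: simple_paths_from_def)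
  then show "path_weight A (ys @ [v]) = count A (last ys, v) * path_weight A ys"
    using path_weight_snoc[of A a zs v] by simp
next
  fix xs assume xs: "xs \<in> simple_paths V u v"
  then have xs_eq: "butlast xs @ [v] = xs" by (auto simp: simple_paths_def simple_paths_from_def)
  then show "butlast xs @ [v] = xs" .
  have "butlast xs \<noteq> []"
  proof
    assume "butlast xs = []"
    then have "xs = [v]" using xs_eq by simp
    then show False using xs assms(2) by (simp add: simple_paths_def simple_paths_from_def)
  qed
  moreover have "distinct (butlast xs @ [v])" "hd (butlast xs @ [v]) = u"
    using xs xs_eq by (auto simp: simple_paths_def simple_paths_from_def)
  moreover have "set (butlast xs) \<subseteq> V"
    using xs in_set_butlastD[of _ xs] by (auto simp: simple_paths_def simple_paths_from_def)
  ultimately show "butlast xs \<in> {ys \<in> simple_paths_from V u. v \<notin> set ys}"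
    by (auto simp: simple_paths_from_def)
qed

text \<open>Acyclicity is needed only to see that a simple path ending in a predecessor of \<open>v\<close>
  cannot already pass through \<open>v\<close>.\<close>

lemma npaths_step:
  assumes dag: "finite_dag V A" and "u \<in> V" "v \<in> V" "u \<noteq> v"
  shows "npaths V A u v = (\<Sum>w\<in>V. count A (w, v) * npaths V A u w)"
proof -
  have fin: "finite V" and ac: "acyclic (set_mset A)" using dag by (auto simp: finite_dag_def)
  let ?P = "simple_paths_from V u"
  have "(\<Sum>w\<in>V. count A (w, v) * npaths V A u w)
      = (\<Sum>w\<in>V. \<Sum>ys\<in>{ys \<in> ?P. last ys = w}. count A (last ys, v) * path_weight A ys)"
    by (simp add: npaths_eq_sum_simple_paths simple_paths_def sum_distrib_left)
  also have "\<dots> = (\<Sum>ys\<in>?P. count A (last ys, v) * path_weight A ys)"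
    by (rule sum.group[OF finite_simple_paths_from[OF fin] fin]) (auto simp: simple_paths_from_def)
  also have "\<dots> = (\<Sum>ys\<in>{ys \<in> ?P. v \<notin> set ys}. count A (last ys, v) * path_weight A ys)"
  proof (rule sum.mono_neutral_right[OF finite_simple_paths_from[OF fin]])
    show "\<forall>ys\<in>?P - {ys \<in> ?P. v \<notin> set ys}. count A (last ys, v) * path_weight A ys = 0"
    proof (rule ballI, rule ccontr)
      fix ys assume ys: "ys \<in> ?P - {ys \<in> ?P. v \<notin> set ys}"
        and "count A (last ys, v) * path_weight A ys \<noteq> 0"
      then have "(last ys, v) \<in># A" "(v, last ys) \<in> (set_mset A)\<^sup>*"
        using path_weight_nonzero_imp_rtrancl[of A ys v] by auto
      then have "(v, v) \<in> (set_mset A)\<^sup>+" by (meson rtrancl_into_trancl1)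
      with ac show False unfolding acyclic_def by blast
    qed
  qed auto
  finally show ?thesis
    unfolding npaths_eq_sum_simple_paths sum_simple_paths_eq_sum_snoc[OF assms(3,4)] by simp
qed

text \<open>The recurrence of \<open>npaths_step\<close> determines path counts from a fixed source; all path-count
  identities below are proved by checking that the other side satisfies it.\<close>

lemma npaths_unique:
  assumes dag: "finite_dag V A" and "u \<in> V" and "f u = 1"
    and rec: "\<And>v. v \<in> V \<Longrightarrow> v \<noteq> u \<Longrightarrow> f v = (\<Sum>w\<in>V. count A (w, v) * f w)"
    and "v \<in> V"
  shows "npaths V A u v = f v"
proof -
  have "wf (set_mset A)"
    using dag by (auto simp: finite_dag_def intro: finite_acyclic_wf)
  then show ?thesis
    using \<open>v \<in> V\<close>
  proof (induction v rule: wf_induct_rule)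
    case (less v)
    show ?case
    proof (cases "v = u")
      case False
      have "npaths V A u v = (\<Sum>w\<in>V. count A (w, v) * npaths V A u w)"
        using npaths_step[OF dag \<open>u \<in> V\<close> less.prems] False by simp
      also have "\<dots> = (\<Sum>w\<in>V. count A (w, v) * f w)"
        by (rule sum.cong[OF refl]) (auto simp: less.IH count_eq_zero_iff)
      finally show ?thesis using rec[OF less.prems False] by simp
    qed (use npaths_self \<open>f u = 1\<close> \<open>u \<in> V\<close> in simp)
  qed
qed

lemma sum_indicator_mult:
  "finite S \<Longrightarrow> (\<Sum>x\<in>S. (if x = a then 1 else 0) * f x) = (if a \<in> S then f a else (0 :: nat))"
  by (simp add: if_distrib[of "\<lambda>c. c * _"] sum.delta cong: if_cong)

lemma npaths_eq_npaths_sole_pred: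
  assumes dag: "finite_dag V A" and "u \<in> V" "v \<in> V" "u \<noteq> v"
    and pred: "\<And>x. count A (x, v) = (if x = p then 1 else 0)"
  shows "npaths V A u v = npaths V A u p"
proof -
  have "(p, v) \<in># A" using pred[of p] by (auto intro: count_inI)
  then have "p \<in> V" using dag by (auto simp: finite_dag_def)
  moreover have "finite V" using dag by (simp add: finite_dag_def)
  ultimately show ?thesis
    using npaths_step[OF assms(1-4)] by (simp add: pred sum_indicator_mult)
qed

lemma npaths_diff_nonzero_imp_rtrancl:
  assumes "npaths V (A - B) x y \<noteq> 0"
  shows "(x, y) \<in> (set_mset A)\<^sup>*"
  using npaths_nonzero_imp_rtrancl[OF assms] rtrancl_mono[of "set_mset (A - B)" "set_mset A"]
  by (auto dest: in_diffD)

lemma sum_npaths_to_predecessors_eq_0: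
  assumes "finite_dag V A"
  shows "(\<Sum>x\<in>V. count A (x, r) * npaths V A r x) = 0"
proof (rule sum.neutral, rule ballI, rule ccontr)
  fix x assume "count A (x, r) * npaths V A r x \<noteq> 0"
  then have "(x, r) \<in># A" "(r, x) \<in> (set_mset A)\<^sup>*"
    using npaths_nonzero_imp_rtrancl[of V A r x] by (auto simp: not_in_iff)
  then show False using assms unfolding finite_dag_def acyclic_def by (meson rtrancl_into_trancl1)
qed

section \<open>Degrees\<close>

lemma count_if_filter_mset_eq_single:
  assumes "filter_mset P A = {#e#}" "P a"
  shows "count A a = (if a = e then 1 else 0)"
proof -
  have "count A a = count (filter_mset P A) a" using assms(2) by simp
  also have "\<dots> = count {#e#} a" unfolding assms(1) ..
  finally show ?thesis by simp
qed

lemma count_in_if_indeg_1: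
  assumes "indeg A v = 1"
  shows "count A (x, v) = (if x = parent A v then 1 else 0)"
proof -
  obtain e where e: "filter_mset (\<lambda>e. snd e = v) A = {#e#}"
    using assms size_1_singleton_mset unfolding indeg_def by blast
  then have "e \<in># filter_mset (\<lambda>e. snd e = v) A" by simp
  then have e_eq: "e = (fst e, v)" by (cases e) simp
  have cnt: "count A (y, v) = (if y = fst e then 1 else 0)" for y
    using count_if_filter_mset_eq_single[OF e, of "(y, v)"] e_eq by (auto simp: prod_eq_iff)
  have "parent A v = fst e"
    unfolding parent_def
  proof (rule some_equality)
    show "(fst e, v) \<in># A" by (rule count_inI) (simp add: cnt)
    fix y assume "(y, v) \<in># A"
    then show "y = fst e" using cnt[of y] by (auto simp: not_in_iff[symmetric] split: if_splits)
  qed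
  then show ?thesis using cnt by simp
qed

lemma count_out_if_outdeg_1:
  assumes "outdeg A v = 1"
  shows "count A (v, x) = (if x = child A v then 1 else 0)"
proof -
  obtain e where e: "filter_mset (\<lambda>e. fst e = v) A = {#e#}"
    using assms size_1_singleton_mset unfolding outdeg_def by blast
  then have "e \<in># filter_mset (\<lambda>e. fst e = v) A" by simp
  then have e_eq: "e = (v, snd e)" by (cases e) simp
  have cnt: "count A (v, y) = (if y = snd e then 1 else 0)" for y
    using count_if_filter_mset_eq_single[OF e, of "(v, y)"] e_eq by (auto simp: prod_eq_iff)
  have "child A v = snd e"
    unfolding child_def
  proof (rule some_equality)
    show "(v, snd e) \<in># A" by (rule count_inI) (simp add: cnt)
    fix y assume "(v, y) \<in># A"
    then show "y = snd e" using cnt[of y] by (auto simp: not_in_iff[symmetric] split: if_splits)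
  qed
  then show ?thesis using cnt by simp
qed

lemma parent_arc: "indeg A v = 1 \<Longrightarrow> (parent A v, v) \<in># A"
  using count_in_if_indeg_1[of A v "parent A v"] by (auto intro: count_inI)

lemma child_arc: "outdeg A v = 1 \<Longrightarrow> (v, child A v) \<in># A"
  using count_out_if_outdeg_1[of A v "child A v"] by (auto intro: count_inI)

lemma count_out_if_outdeg_0:
  assumes "outdeg A v = 0"
  shows "count A (v, x) = 0"
proof -
  have "filter_mset (\<lambda>e. fst e = v) A = {#}" using assms unfolding outdeg_def by simp
  then show ?thesis by (auto simp: count_eq_zero_iff)
qed

lemma count_out_if_outdeg_2:
  assumes "outdeg A v = 2" "(v, a) \<in># A" "(v, b) \<in># A" "a \<noteq> b"
  shows "count A (v, x) = (if x = a then 1 else 0) + (if x = b then 1 else 0)"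
proof -
  let ?F = "filter_mset (\<lambda>e. fst e = v) A"
  have sub: "{#(v, a), (v, b)#} \<subseteq># ?F"
    using assms(2-4) by (simp add: insert_subset_eq_iff in_diff_count)
  have "\<not> {#(v, a), (v, b)#} \<subset># ?F"
    using mset_subset_size assms(1) unfolding outdeg_def by fastforce
  with sub have F: "?F = {#(v, a), (v, b)#}" by (simp add: subset_mset.le_less)
  have "count A (v, x) = count ?F (v, x)" by simp
  also have "\<dots> = count {#(v, a), (v, b)#} (v, x)" unfolding F ..
  finally show ?thesis by simp
qed

lemma size_filter_mset_remove1:
  assumes "e \<in># A"
  shows "size (filter_mset P (A - {#e#})) = size (filter_mset P A) - (if P e then 1 else 0)"
  using assms by (cases "P e") (simp_all add: size_Diff_singleton)

lemma size_filter_mset_replace: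
  assumes "R \<subseteq># A" "size (filter_mset P R) = size (filter_mset P S)"
  shows "size (filter_mset P (A - R + S)) = size (filter_mset P A)"
proof -
  have sub: "filter_mset P R \<subseteq># filter_mset P A" using assms(1) by (rule multiset_filter_mono)
  have "size (filter_mset P (A - R + S))
      = size (filter_mset P A - filter_mset P R) + size (filter_mset P S)"
    by (simp only: filter_union_mset filter_diff_mset size_union)
  also have "\<dots> = size (filter_mset P A) - size (filter_mset P R) + size (filter_mset P S)"
    using sub by (simp add: size_Diff_submset)
  finally show ?thesis using assms(2) size_mset_mono[OF sub] by simp
qed

lemma node_classes_eq_if_same_degrees:
  assumes "V' \<subseteq> V" and deg: "\<And>v. v \<in> V' \<Longrightarrow> indeg A' v = indeg A v \<and> outdeg A' v = outdeg A v"
  shows "VT V' A' = VT V A \<inter> V'" "VH V' A' = VH V A \<inter> V'" "leaves V' A' = leaves V A \<inter> V'"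
proof -
  have "is_leaf A' v = is_leaf A v" "is_tree_node A' v = is_tree_node A v"
    "is_retic A' v = is_retic A v"
    if "v \<in> V'" for v
    using deg[OF that] by (simp_all add: is_leaf_def is_tree_node_def is_retic_def)
  then show "VT V' A' = VT V A \<inter> V'" "VH V' A' = VH V A \<inter> V'" "leaves V' A' = leaves V A \<inter> V'"
    using assms(1) unfolding VT_def VH_def leaves_def by blast+
qed

lemma npaths_eq_npaths_parent:
  "finite_dag V A \<Longrightarrow> u \<in> V \<Longrightarrow> v \<in> V \<Longrightarrow> u \<noteq> v \<Longrightarrow> indeg A v = 1
    \<Longrightarrow> npaths V A u v = npaths V A u (parent A v)"
  by (rule npaths_eq_npaths_sole_pred) (simp_all add: count_in_if_indeg_1)

lemma rtrancl_from_leaf: "outdeg A x = 0 \<Longrightarrow> (x, y) \<in> (set_mset A)\<^sup>* \<Longrightarrow> y = x"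
  by (erule converse_rtranclE) (simp, metis count_out_if_outdeg_0 count_eq_zero_iff)

lemma npaths_from_leaf:
  assumes "i \<in> V" "outdeg A i = 0"
  shows "npaths V A i y = (if y = i then 1 else 0)"
proof (cases "y = i")
  case False
  then show ?thesis using npaths_nonzero_imp_rtrancl rtrancl_from_leaf[OF assms(2)] by fastforce
qed (simp add: npaths_self[OF assms(1)])

section \<open>Suppressing a node, deleting an arc or a leaf\<close>

lemma indeg_remove1: "e \<in># A \<Longrightarrow> indeg (A - {#e#}) v = indeg A v - (if snd e = v then 1 else 0)"
  unfolding indeg_def by (rule size_filter_mset_remove1)

lemma outdeg_remove1: "e \<in># A \<Longrightarrow> outdeg (A - {#e#}) v = outdeg A v - (if fst e = v then 1 else 0)"
  unfolding outdeg_def by (rule size_filter_mset_remove1)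

lemma finite_dag_remove1: "finite_dag V A \<Longrightarrow> finite_dag V (A - {#e#})"
  unfolding finite_dag_def by (meson acyclic_subset in_diffD subsetI subset_trans)

lemma fst_suppress [simp]: "fst (suppress V A w) = V - {w}"
  by (simp add: suppress_def Let_def)

lemma count_suppress:
  assumes "x \<noteq> w" "y \<noteq> w"
  shows "count (snd (suppress V A w)) (x, y)
    = count A (x, y) + (if x = parent A w \<and> y = child A w then 1 else 0)"
  using assms by (simp add: suppress_def Let_def)

context
  fixes V A w
  assumes dag: "finite_dag V A" and w: "w \<in> V" "indeg A w = 1" "outdeg A w = 1"
begin

lemma suppressed_node_arcs:
  "(parent A w, w) \<in># A" "(w, child A w) \<in># A" "parent A w \<noteq> w" "child A w \<noteq> w"
proof -
  show in_arcs: "(parent A w, w) \<in># A" "(w, child A w) \<in># A"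
    using parent_arc[OF w(2)] child_arc[OF w(3)] .
  have "acyclic (set_mset A)" using dag by (simp add: finite_dag_def)
  then show "parent A w \<noteq> w" "child A w \<noteq> w"
    using in_arcs unfolding acyclic_def by (metis r_into_trancl')+
qed

lemma arcs_suppress:
  "set_mset (snd (suppress V A w)) \<subseteq> ((V - {w}) \<times> (V - {w})) \<inter> (set_mset A)\<^sup>+"
proof
  fix e assume e: "e \<in># snd (suppress V A w)"
  obtain x y where [simp]: "e = (x, y)" by (cases e)
  show "e \<in> ((V - {w}) \<times> (V - {w})) \<inter> (set_mset A)\<^sup>+"
  proof (cases "x = w \<or> y = w")
    case True
    have "count (snd (suppress V A w)) (x, y) = 0"
      using True suppressed_node_arcs count_in_if_indeg_1[OF w(2)] count_out_if_outdeg_1[OF w(3)]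
      by (auto simp: suppress_def Let_def)
    with e show ?thesis by (simp add: count_eq_zero_iff)
  next
    case False
    then have ne: "x \<noteq> w" "y \<noteq> w" by auto
    have "0 < count (snd (suppress V A w)) (x, y)" using e by simp
    then have "0 < count A (x, y) + (if x = parent A w \<and> y = child A w then 1 else 0)"
      unfolding count_suppress[OF ne] .
    then have "(x, y) \<in># A \<or> (x, y) = (parent A w, child A w)"
      by (auto split: if_splits)
    moreover have "(parent A w, child A w) \<in> (set_mset A)\<^sup>+"
      using suppressed_node_arcs by (meson r_into_trancl' trancl_into_trancl)
    moreover have "set_mset A \<subseteq> V \<times> V" using dag by (simp add: finite_dag_def)
    ultimately show ?thesis using False by (auto dest: tranclD tranclD2)
  qed
qed

lemma finite_dag_suppress: "finite_dag (fst (suppress V A w)) (snd (suppress V A w))"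
proof -
  have "acyclic ((set_mset A)\<^sup>+)" using dag by (simp add: finite_dag_def acyclic_def)
  then show ?thesis
    using dag arcs_suppress acyclic_subset unfolding finite_dag_def by auto
qed

lemma degrees_suppress:
  assumes "v \<noteq> w"
  shows "indeg (snd (suppress V A w)) v = indeg A v" "outdeg (snd (suppress V A w)) v = outdeg A v"
proof -
  let ?R = "{#(parent A w, w), (w, child A w)#}"
  have R: "?R \<subseteq># A"
    using suppressed_node_arcs by (simp add: insert_subset_eq_iff in_diff_count)
  have A': "snd (suppress V A w) = A - ?R + {#(parent A w, child A w)#}"
    by (simp add: suppress_def Let_def)
  have "size (filter_mset (\<lambda>e. snd e = v) ?R)
      = size (filter_mset (\<lambda>e. snd e = v) {#(parent A w, child A w)#})"
    using assms suppressed_node_arcs by auto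
  then show "indeg (snd (suppress V A w)) v = indeg A v"
    unfolding indeg_def A' by (rule size_filter_mset_replace[OF R])
  have "size (filter_mset (\<lambda>e. fst e = v) ?R)
      = size (filter_mset (\<lambda>e. fst e = v) {#(parent A w, child A w)#})"
    using assms suppressed_node_arcs by auto
  then show "outdeg (snd (suppress V A w)) v = outdeg A v"
    unfolding outdeg_def A' by (rule size_filter_mset_replace[OF R])
qed

text \<open>A path through \<open>w\<close> uses the arcs \<open>(parent A w, w)\<close> and \<open>(w, child A w)\<close>, which
  suppression merges into one arc.\<close>

lemma npaths_suppress:
  assumes "u \<in> V - {w}" "v \<in> V - {w}"
  shows "npaths (V - {w}) (snd (suppress V A w)) u v = npaths V A u v"
proof -
  let ?p = "parent A w" and ?c = "child A w" and ?A' = "snd (suppress V A w)"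
  have finV: "finite V" and "set_mset A \<subseteq> V \<times> V" using dag by (auto simp: finite_dag_def)
  then have p: "?p \<in> V - {w}" using suppressed_node_arcs by auto
  have "npaths V A u y = (\<Sum>x\<in>V - {w}. count ?A' (x, y) * npaths V A u x)"
    if y: "y \<in> V - {w}" "y \<noteq> u" for y
  proof -
    have "(\<Sum>x\<in>V - {w}. count ?A' (x, y) * npaths V A u x)
        = (\<Sum>x\<in>V - {w}. count A (x, y) * npaths V A u x
            + (if x = ?p then (if y = ?c then npaths V A u x else 0) else 0))"
      using y by (intro sum.cong) (auto simp: count_suppress)
    also have "\<dots> = (\<Sum>x\<in>V - {w}. count A (x, y) * npaths V A u x)
          + (\<Sum>x\<in>V - {w}. if x = ?p then (if y = ?c then npaths V A u x else 0) else 0)"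
      by (rule sum.distrib)
    also have "\<dots> = (\<Sum>x\<in>V - {w}. count A (x, y) * npaths V A u x)
          + count A (w, y) * npaths V A u w"
      using p finV npaths_eq_npaths_parent[OF dag _ w(1) _ w(2), of u] assms(1)
      by (simp add: count_out_if_outdeg_1[OF w(3)] sum.delta)
    also have "\<dots> = npaths V A u y"
      using npaths_step[OF dag, of u y]
        sum.remove[OF finV w(1), of "\<lambda>x. count A (x, y) * npaths V A u x"]
        y assms(1) by simp
    finally show ?thesis by simp
  qed
  then show ?thesis
    using npaths_unique[OF finite_dag_suppress[simplified], of u "npaths V A u"] assms
    by (simp add: npaths_self)
qed

end

lemma sum_count_remove_arc:
  assumes "finite V" "t \<in> V" "count A (t, r) = 1"
  shows "(\<Sum>x\<in>V. count A (x, y) * g x)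
    = (\<Sum>x\<in>V. count (A - {#(t, r)#}) (x, y) * g x) + (if y = r then g t else 0)"
proof -
  have "(\<Sum>x\<in>V. count A (x, y) * g x)
      = (\<Sum>x\<in>V. count (A - {#(t, r)#}) (x, y) * g x
          + (if x = t then (if y = r then g x else 0) else 0))"
    using assms(3) by (intro sum.cong) auto
  also have "\<dots> = (\<Sum>x\<in>V. count (A - {#(t, r)#}) (x, y) * g x) + (if y = r then g t else 0)"
    using assms(1,2) by (simp add: sum.distrib sum.delta)
  finally show ?thesis .
qed

text \<open>The paths using the arc \<open>(t, r)\<close> are exactly the concatenations of a path to \<open>t\<close>
  and a path from \<open>r\<close>, neither of which can use \<open>(t, r)\<close> again.\<close>

lemma npaths_remove_arc:
  assumes dag: "finite_dag V A" and tr: "count A (t, r) = 1" and "u \<in> V" "v \<in> V"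
  defines "A0 \<equiv> A - {#(t, r)#}"
  shows "npaths V A u v = npaths V A0 u v + npaths V A0 u t * npaths V A0 r v"
proof -
  have dag0: "finite_dag V A0" unfolding A0_def using dag by (rule finite_dag_remove1)
  have finV: "finite V" and "set_mset A \<subseteq> V \<times> V" and ac: "acyclic (set_mset A)"
    using dag by (auto simp: finite_dag_def)
  moreover have "(t, r) \<in># A" using tr by (simp add: count_inI)
  ultimately have tV: "t \<in> V" and rV: "r \<in> V" by auto
  have no_cycle: "False" if "(r, x) \<in> (set_mset A)\<^sup>*" "(x, t) \<in> (set_mset A)\<^sup>*" for x
    using that \<open>(t, r) \<in># A\<close> ac unfolding acyclic_def
    by (meson rtrancl_trans rtrancl_into_trancl1 r_into_trancl' trancl_rtrancl_trancl)
  define g where "g y = npaths V A0 u y + npaths V A0 u t * npaths V A0 r y" for y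
  have rt: "npaths V A0 r t = 0"
    using no_cycle[of t] npaths_diff_nonzero_imp_rtrancl[of V A _ r t] unfolding A0_def by blast
  have rec: "g y = (\<Sum>x\<in>V. count A (x, y) * g x)" if y: "y \<in> V" "y \<noteq> u" for y
  proof -
    have "(\<Sum>x\<in>V. count A0 (x, y) * g x)
        = (\<Sum>x\<in>V. count A0 (x, y) * npaths V A0 u x)
          + npaths V A0 u t * (\<Sum>x\<in>V. count A0 (x, y) * npaths V A0 r x)"
      by (simp add: g_def algebra_simps sum.distrib sum_distrib_left)
    then have "(\<Sum>x\<in>V. count A0 (x, y) * g x)
        = npaths V A0 u y + npaths V A0 u t * (if y = r then 0 else npaths V A0 r y)"
      using npaths_step[OF dag0 \<open>u \<in> V\<close> y(1)] npaths_step[OF dag0 rV y(1)] y(2)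
        sum_npaths_to_predecessors_eq_0[OF dag0]
      by (cases "y = r") auto
    then show ?thesis
      using sum_count_remove_arc[OF finV tV tr, of y g] rt npaths_self[OF rV]
      by (simp add: g_def A0_def)
  qed
  have gu: "g u = 1"
  proof -
    have "npaths V A0 u t = 0 \<or> npaths V A0 r u = 0"
      using no_cycle[of u] npaths_diff_nonzero_imp_rtrancl[of V A _ u t]
        npaths_diff_nonzero_imp_rtrancl[of V A _ r u]
      unfolding A0_def by blast
    then show ?thesis using npaths_self[OF \<open>u \<in> V\<close>] by (auto simp: g_def)
  qed
  show ?thesis using npaths_unique[OF dag \<open>u \<in> V\<close> gu rec \<open>v \<in> V\<close>] by (simp add: g_def)
qed

context
  fixes V A i
  assumes dag: "finite_dag V A" and leaf: "i \<in> V" "indeg A i = 1" "outdeg A i = 0"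
begin

lemma count_remove_leaf:
  "count (A - {#(parent A i, i)#}) (x, y) = (if y = i then 0 else count A (x, y))"
  by (simp add: count_in_if_indeg_1[OF leaf(2)])

lemma finite_dag_remove_leaf: "finite_dag (V - {i}) (A - {#(parent A i, i)#})"
proof -
  have "set_mset (A - {#(parent A i, i)#}) \<subseteq> (V - {i}) \<times> (V - {i})"
  proof (rule subrelI)
    fix x y assume xy: "(x, y) \<in># A - {#(parent A i, i)#}"
    then have "0 < count (A - {#(parent A i, i)#}) (x, y)" by (simp only: count_greater_zero_iff)
    then have "y \<noteq> i" unfolding count_remove_leaf by (auto split: if_splits)
    moreover have "(x, y) \<in># A" using xy by (rule in_diffD)
    moreover have "x \<noteq> i" using calculation(2) count_out_if_outdeg_0[OF leaf(3)]
      by (metis count_eq_zero_iff)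
    ultimately show "(x, y) \<in> (V - {i}) \<times> (V - {i})" using dag by (auto simp: finite_dag_def)
  qed
  then show ?thesis using finite_dag_remove1[OF dag] by (auto simp: finite_dag_def)
qed

lemma npaths_remove_leaf:
  assumes "u \<in> V - {i}" "v \<in> V - {i}"
  shows "npaths (V - {i}) (A - {#(parent A i, i)#}) u v = npaths V A u v"
proof -
  have finV: "finite V" using dag by (simp add: finite_dag_def)
  have "npaths V A u y = (\<Sum>x\<in>V - {i}. count (A - {#(parent A i, i)#}) (x, y) * npaths V A u x)"
    if "y \<in> V - {i}" "y \<noteq> u" for y
    using npaths_step[OF dag, of u y]
      sum.remove[OF finV leaf(1), of "\<lambda>x. count A (x, y) * npaths V A u x"]
      that assms(1) by (simp add: count_remove_leaf count_out_if_outdeg_0[OF leaf(3)])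
  then show ?thesis
    using npaths_unique[OF finite_dag_remove_leaf, of u "npaths V A u"] assms
    by (simp add: npaths_self)
qed

end

section \<open>Phylogenetic networks\<close>

lemma finite_dag_if_phylo_network: "phylo_network n V A X \<Longrightarrow> finite_dag V A"
  by (simp add: phylo_network_def finite_dag_def)

lemma leaf_in_range: "phylo_network n V A X \<Longrightarrow> i \<in> leaves V A \<Longrightarrow> 1 \<le> i \<and> i \<le> n"
  by (auto simp: phylo_network_def)

lemma mu_leaf:
  assumes "i \<in> leaves V A" "1 \<le> i" "i \<le> n"
  shows "mu n V A i = delta {i}"
proof
  fix k
  have i: "i \<in> V" "outdeg A i = 0" "i \<notin> VH V A"
    using assms(1) by (auto simp: leaves_def VH_def is_leaf_def is_retic_def)
  then have "(\<Sum>h\<in>VH V A. npaths V A i h) = 0" by (intro sum.neutral) (auto simp: npaths_from_leaf)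
  then show "mu n V A i k = delta {i} k"
    using assms i by (auto simp: mu_def delta_def npaths_from_leaf)
qed

lemma image_mset_mset_set_Diff:
  assumes "finite S" "D \<subseteq> S" "\<And>x. x \<in> S - D \<Longrightarrow> f' x = g (f x)"
  shows "image_mset f' (mset_set (S - D))
    = image_mset g (image_mset f (mset_set S) - image_mset f (mset_set D))"
proof -
  have "image_mset f' (mset_set (S - D)) = image_mset (g \<circ> f) (mset_set (S - D))"
    by (rule image_mset_cong) (use assms(1,3) in auto)
  also have "\<dots> = image_mset g (image_mset f (mset_set (S - D)))"
    by (simp add: multiset.map_comp)
  also have "image_mset f (mset_set (S - D))
      = image_mset f (mset_set S) - image_mset f (mset_set D)"
    using assms(1,2) by (simp add: mset_set_Diff image_mset_Diff subset_imp_msubset_mset_set)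
  finally show ?thesis .
qed

lemma tree_node_if_two_children:
  assumes pn: "phylo_network n V A X" and "(v, a) \<in># A" "(v, b) \<in># A" "a \<noteq> b"
  shows "is_tree_node A v"
proof -
  have "{#(v, a), (v, b)#} \<subseteq># filter_mset (\<lambda>e. fst e = v) A"
    using assms(2-4) by (simp add: insert_subset_eq_iff in_diff_count)
  then have "size {#(v, a), (v, b)#} \<le> outdeg A v" unfolding outdeg_def by (rule size_mset_mono)
  moreover have "v \<in> V" using pn assms(2) by (auto simp: phylo_network_def)
  with pn have "is_root A v \<or> is_leaf A v \<or> is_tree_node A v \<or> is_retic A v"
    by (simp add: phylo_network_def)
  ultimately show ?thesis by (auto simp: is_root_def is_leaf_def is_retic_def)
qed

section \<open>Cherries\<close>

context
  fixes n V A X i j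
  assumes pn: "phylo_network n V A X" and cherry: "is_cherry V A i j"
begin

lemma cherry_leaves:
  "i \<in> V" "indeg A i = 1" "outdeg A i = 0" "j \<in> V" "indeg A j = 1" "outdeg A j = 0" "i \<noteq> j"
  "parent A j = parent A i"
  using cherry by (auto simp: is_cherry_def leaves_def is_leaf_def)

lemma cherry_parent:
  "parent A i \<in> V - {i, j}" "is_tree_node A (parent A i)"
  "count A (parent A i, x) = (if x = i then 1 else 0) + (if x = j then 1 else 0)"
proof -
  have arcs: "(parent A i, i) \<in># A" "(parent A i, j) \<in># A"
    using parent_arc[OF cherry_leaves(2)] parent_arc[OF cherry_leaves(5)] cherry_leaves(8)
    by simp_all
  show tree: "is_tree_node A (parent A i)"
    using tree_node_if_two_children[OF pn arcs cherry_leaves(7)] .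
  show "count A (parent A i, x) = (if x = i then 1 else 0) + (if x = j then 1 else 0)"
    using tree arcs cherry_leaves(7) by (simp add: count_out_if_outdeg_2 is_tree_node_def)
  have "parent A i \<noteq> i" "parent A i \<noteq> j"
    using tree cherry_leaves(3,6) by (auto simp: is_tree_node_def)
  then show "parent A i \<in> V - {i, j}"
    using arcs pn by (auto simp: phylo_network_def)
qed

lemma cherry_node_types:
  "parent A i \<notin> VH V A" "parent A i \<notin> leaves V A" "i \<notin> VH V A" "j \<notin> VH V A"
  using cherry_parent(2) cherry_leaves(2,3,5,6)
  by (auto simp: VH_def leaves_def is_tree_node_def is_retic_def is_leaf_def)

lemma cherry_reduce_network:
  defines "V' \<equiv> fst (cherry_reduce V A i j)" and "A' \<equiv> snd (cherry_reduce V A i j)"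
  shows "V' = V - {i, parent A i}"
    and "\<And>v. v \<in> V' \<Longrightarrow> indeg A' v = indeg A v \<and> outdeg A' v = outdeg A v"
    and "\<And>u v. u \<in> V' \<Longrightarrow> v \<in> V' \<Longrightarrow> npaths V' A' u v = npaths V A u v"
proof -
  let ?p = "parent A i" and ?A0 = "A - {#(parent A i, i)#}"
  have dag: "finite_dag V A" using pn by (rule finite_dag_if_phylo_network)
  have pi: "(?p, i) \<in># A" by (rule parent_arc[OF cherry_leaves(2)])
  note leaf = cherry_leaves(1-3)
  have dag0: "finite_dag (V - {i}) ?A0" by (rule finite_dag_remove_leaf[OF dag leaf])
  have p: "?p \<in> V - {i}" "indeg ?A0 ?p = 1" "outdeg ?A0 ?p = 1"
    using cherry_parent(1,2) pi by (auto simp: indeg_remove1 outdeg_remove1 is_tree_node_def)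
  have red: "cherry_reduce V A i j = suppress (V - {i}) ?A0 ?p" by (simp add: cherry_reduce_def)
  have V'_eq: "V - {i} - {?p} = V - {i, ?p}" by auto
  show V': "V' = V - {i, ?p}" unfolding V'_def red fst_suppress V'_eq ..
  show "indeg A' v = indeg A v \<and> outdeg A' v = outdeg A v" if "v \<in> V'" for v
    using that pi degrees_suppress[OF dag0 p, of v] unfolding A'_def red V'
    by (auto simp: indeg_remove1 outdeg_remove1)
  show "npaths V' A' u v = npaths V A u v" if "u \<in> V'" "v \<in> V'" for u v
    using that npaths_suppress[OF dag0 p, of u v] npaths_remove_leaf[OF dag leaf, of u v]
    unfolding A'_def red V' V'_eq[symmetric] by auto
qed

lemma npaths_from_cherry_parent:
  "npaths V A (parent A i) y = (if y \<in> {i, j} then 1 else if y = parent A i then 1 else 0)"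
proof -
  have dag: "finite_dag V A" using pn by (rule finite_dag_if_phylo_network)
  have p: "parent A i \<in> V" "parent A i \<noteq> i" "parent A i \<noteq> j" using cherry_parent(1) by auto
  have "y \<in> {parent A i, i, j}" if "(parent A i, y) \<in> (set_mset A)\<^sup>*" for y
    using that
  proof (cases rule: converse_rtranclE)
    case (step c)
    then have "count A (parent A i, c) \<noteq> 0" by simp
    then have "c = i \<or> c = j" using cherry_parent(3)[of c] by (auto split: if_splits)
    then show ?thesis using step rtrancl_from_leaf cherry_leaves(3,6) by blast
  qed simp
  then have "npaths V A (parent A i) y = 0" if "y \<notin> {parent A i, i, j}" for y
    using that npaths_nonzero_imp_rtrancl by blast
  moreover have "npaths V A (parent A i) i = 1" "npaths V A (parent A i) j = 1"
    using npaths_eq_npaths_parent[OF dag p(1) cherry_leaves(1) p(2) cherry_leaves(2)]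
      npaths_eq_npaths_parent[OF dag p(1) cherry_leaves(4) p(3) cherry_leaves(5)]
      npaths_self[OF p(1)] cherry_leaves(8) by simp_all
  ultimately show ?thesis using npaths_self[OF p(1)] by auto
qed

lemma mu_cherry_parent: "mu n V A (parent A i) = delta {i, j}"
proof
  fix k
  note notin = cherry_node_types
  have "(\<Sum>h\<in>VH V A. npaths V A (parent A i) h) = 0"
    using notin by (intro sum.neutral) (auto simp: npaths_from_cherry_parent)
  moreover have "i \<in> leaves V A" "j \<in> leaves V A" using cherry by (auto simp: is_cherry_def)
  ultimately show "mu n V A (parent A i) k = delta {i, j} k"
    using notin leaf_in_range[OF pn] by (auto simp: mu_def delta_def npaths_from_cherry_parent)
qed

lemma cherry_reduce_node_classes:
  "VT (fst (cherry_reduce V A i j)) (snd (cherry_reduce V A i j)) = VT V A - {i, parent A i}"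
  "VH (fst (cherry_reduce V A i j)) (snd (cherry_reduce V A i j)) = VH V A"
  "leaves (fst (cherry_reduce V A i j)) (snd (cherry_reduce V A i j)) = leaves V A - {i}"
proof -
  let ?V' = "fst (cherry_reduce V A i j)" and ?A' = "snd (cherry_reduce V A i j)"
  have sub: "?V' \<subseteq> V" using cherry_reduce_network(1) by auto
  have "VT ?V' ?A' = VT V A \<inter> ?V'" "VH ?V' ?A' = VH V A \<inter> ?V'" "leaves ?V' ?A' = leaves V A \<inter> ?V'"
    using node_classes_eq_if_same_degrees[OF sub cherry_reduce_network(2)] by blast+
  then show "VT ?V' ?A' = VT V A - {i, parent A i}" "VH ?V' ?A' = VH V A"
    "leaves ?V' ?A' = leaves V A - {i}"
    using cherry_reduce_network(1) cherry_node_types by (auto simp: VT_def VH_def leaves_def)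
qed

lemma mu_cherry_reduce:
  assumes "u \<in> V - {i, parent A i}"
  shows "mu n (fst (cherry_reduce V A i j)) (snd (cherry_reduce V A i j)) u
    = (\<lambda>k. mu n V A u k - mu n V A u i * delta {i} k)"
proof
  fix k
  let ?V' = "fst (cherry_reduce V A i j)" and ?A' = "snd (cherry_reduce V A i j)"
  note net = cherry_reduce_network and classes = cherry_reduce_node_classes(2,3)
  note notin = cherry_node_types
  have "(\<Sum>h\<in>VH V A. npaths ?V' ?A' u h) = (\<Sum>h\<in>VH V A. npaths V A u h)"
    using notin assms net(1,3) by (intro sum.cong) (auto simp: VH_def)
  moreover have "npaths ?V' ?A' u k = npaths V A u k" if "k \<in> leaves V A - {i}"
    using that notin assms net(1) net(3)[of u k] by (auto simp: leaves_def)
  moreover have "1 \<le> i" using leaf_in_range[OF pn] cherry by (auto simp: is_cherry_def)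
  ultimately show "mu n ?V' ?A' u k = mu n V A u k - mu n V A u i * delta {i} k"
    unfolding mu_def delta_def classes by auto
qed

lemma mu_multiset_cherry_reduce:
  "mu_multiset n (fst (cherry_reduce V A i j)) (snd (cherry_reduce V A i j))
    = cherry_red_ms (mu_multiset n V A) i j"
proof -
  let ?V' = "fst (cherry_reduce V A i j)" and ?A' = "snd (cherry_reduce V A i j)"
  have fin: "finite (VT V A)" using pn by (simp add: phylo_network_def VT_def)
  have D: "{i, parent A i} \<subseteq> VT V A"
    using cherry_leaves cherry_parent by (auto simp: VT_def is_leaf_def)
  have "mu_multiset n ?V' ?A' = image_mset (mu n ?V' ?A') (mset_set (VT V A - {i, parent A i}))"
    by (simp add: mu_multiset_def cherry_reduce_node_classes(1))
  also have "\<dots> = image_mset (\<lambda>m k. m k - m i * delta {i} k)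
      (mu_multiset n V A - image_mset (mu n V A) (mset_set {i, parent A i}))"
    unfolding mu_multiset_def
    by (rule image_mset_mset_set_Diff[OF fin D]) (simp add: mu_cherry_reduce VT_def)
  also have "image_mset (mu n V A) (mset_set {i, parent A i}) = {#delta {i}, delta {i, j}#}"
    using cherry_parent(1) mu_leaf[of i V A n] mu_cherry_parent cherry leaf_in_range[OF pn]
    by (auto simp: is_cherry_def)
  finally show ?thesis unfolding cherry_red_ms_def .
qed

end

section \<open>Reticulated cherries\<close>

context
  fixes n V A X i j
  assumes pn: "phylo_network n V A X" and rc: "is_retic_cherry V A i j"
begin

lemma retic_cherry_leaves:
  "i \<in> V" "indeg A i = 1" "outdeg A i = 0" "j \<in> V" "indeg A j = 1" "outdeg A j = 0" "i \<noteq> j"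
  "1 \<le> i" "i \<le> n" "1 \<le> j" "j \<le> n"
  using rc leaf_in_range[OF pn] by (auto simp: is_retic_cherry_def leaves_def is_leaf_def)

lemma retic_cherry_parents:
  "parent A i \<in> V - {i, j}" "parent A j \<in> V - {i, j, parent A i}"
  "is_retic A (parent A i)" "is_tree_node A (parent A j)"
  "count A (parent A i, x) = (if x = i then 1 else 0)"
  "count A (parent A j, x) = (if x = j then 1 else 0) + (if x = parent A i then 1 else 0)"
proof -
  let ?r = "parent A i" and ?t = "parent A j"
  have arcs: "(?r, i) \<in># A" "(?t, j) \<in># A" "(?t, ?r) \<in># A"
    using parent_arc[OF retic_cherry_leaves(2)] parent_arc[OF retic_cherry_leaves(5)] rc
    by (simp_all add: is_retic_cherry_def)
  show r: "is_retic A ?r" and t: "is_tree_node A ?t" using rc by (auto simp: is_retic_cherry_def)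
  then have ne: "?r \<noteq> i" "?r \<noteq> j" "?t \<noteq> i" "?t \<noteq> j" "?t \<noteq> ?r"
    using retic_cherry_leaves(3,6) by (auto simp: is_retic_def is_tree_node_def)
  moreover have "set_mset A \<subseteq> V \<times> V" using pn by (simp add: phylo_network_def)
  ultimately show "?r \<in> V - {i, j}" "?t \<in> V - {i, j, ?r}" using arcs by auto
  have "child A ?r = i"
    using arcs(1) count_out_if_outdeg_1[of A ?r i] r
    by (auto simp: is_retic_def count_eq_zero_iff split: if_splits)
  then show "count A (?r, x) = (if x = i then 1 else 0)"
    using count_out_if_outdeg_1[of A ?r x] r by (simp add: is_retic_def)
  show "count A (?t, x) = (if x = j then 1 else 0) + (if x = ?r then 1 else 0)"
    using count_out_if_outdeg_2[of A ?t j ?r x] t arcs ne by (simp add: is_tree_node_def)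
qed

lemma retic_node_types:
  "parent A i \<in> VH V A" "parent A i \<notin> leaves V A" "parent A i \<notin> VT V A"
  "parent A j \<notin> VH V A" "parent A j \<notin> leaves V A" "parent A j \<in> VT V A"
  "i \<notin> VH V A" "j \<notin> VH V A"
  using retic_cherry_parents(1-4) retic_cherry_leaves
  by (auto simp: VH_def VT_def leaves_def is_retic_def is_tree_node_def is_leaf_def)

lemma retic_reduce_network:
  defines "V' \<equiv> fst (retic_reduce V A i j)" and "A' \<equiv> snd (retic_reduce V A i j)"
  shows "V' = V - {parent A i, parent A j}"
    and "\<And>v. v \<in> V' \<Longrightarrow> indeg A' v = indeg A v \<and> outdeg A' v = outdeg A v"
    and "\<And>u v. u \<in> V' \<Longrightarrow> v \<in> V' \<Longrightarrow> npaths V' A' u v = npaths V (A - {#(parent A j, parent A i)#}) u v"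
proof -
  let ?r = "parent A i" and ?t = "parent A j"
  let ?A0 = "A - {#(?t, ?r)#}"
  let ?A1 = "snd (suppress V ?A0 ?r)"
  note par = retic_cherry_parents
  have dag0: "finite_dag V ?A0" using finite_dag_if_phylo_network[OF pn]
    by (rule finite_dag_remove1)
  have tr: "(?t, ?r) \<in># A" using par(6)[of ?r] by (simp add: count_inI)
  have r: "?r \<in> V" "indeg ?A0 ?r = 1" "outdeg ?A0 ?r = 1"
    using par(1-3) tr by (auto simp: indeg_remove1 outdeg_remove1 is_retic_def)
  have dag1: "finite_dag (V - {?r}) ?A1" using finite_dag_suppress[OF dag0 r] by simp
  have t: "?t \<in> V - {?r}" "indeg ?A1 ?t = 1" "outdeg ?A1 ?t = 1"
    using par(2,4) tr degrees_suppress[OF dag0 r, of ?t]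
    by (auto simp: indeg_remove1 outdeg_remove1 is_tree_node_def)
  have red: "retic_reduce V A i j = suppress (V - {?r}) ?A1 ?t"
    by (simp add: retic_reduce_def Let_def)
  have V'_eq: "V - {?r} - {?t} = V - {?r, ?t}" by auto
  show V': "V' = V - {?r, ?t}" unfolding V'_def red fst_suppress V'_eq ..
  show "indeg A' v = indeg A v \<and> outdeg A' v = outdeg A v" if "v \<in> V'" for v
    using that tr degrees_suppress[OF dag1 t, of v] degrees_suppress[OF dag0 r, of v]
    unfolding A'_def red V' by (auto simp: indeg_remove1 outdeg_remove1)
  show "npaths V' A' u v = npaths V ?A0 u v" if "u \<in> V'" "v \<in> V'" for u v
    using that npaths_suppress[OF dag1 t, of u v] npaths_suppress[OF dag0 r, of u v]
    unfolding A'_def red V' V'_eq[symmetric] by auto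
qed

lemma rtrancl_from_retic_parent:
  assumes "(parent A i, y) \<in> (set_mset A)\<^sup>*"
  shows "y = parent A i \<or> y = i"
  using assms
proof (cases rule: converse_rtranclE)
  case (step c)
  then have "count A (parent A i, c) \<noteq> 0" by simp
  then have "c = i" using retic_cherry_parents(5)[of c] by (simp split: if_splits)
  then show ?thesis using step rtrancl_from_leaf retic_cherry_leaves(3) by blast
qed simp

lemma npaths_from_retic_parent_cut:
  assumes "v \<noteq> parent A i"
  shows "npaths V (A - {#(parent A j, parent A i)#}) (parent A i) v = (if v = i then 1 else 0)"
proof -
  let ?r = "parent A i" and ?A0 = "A - {#(parent A j, parent A i)#}"
  have dag0: "finite_dag V ?A0" using finite_dag_if_phylo_network[OF pn]
    by (rule finite_dag_remove1)
  have r: "?r \<in> V" "?r \<noteq> i" using retic_cherry_parents(1) by auto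
  have "count ?A0 (x, i) = (if x = ?r then 1 else 0)" for x
    using r(2) count_in_if_indeg_1[OF retic_cherry_leaves(2), of x] by auto
  then have "npaths V ?A0 ?r i = 1"
    using npaths_eq_npaths_sole_pred[OF dag0 r(1) retic_cherry_leaves(1) r(2)] npaths_self[OF r(1)]
    by simp
  moreover have "npaths V ?A0 ?r v = 0" if "v \<noteq> i"
    using that assms npaths_diff_nonzero_imp_rtrancl rtrancl_from_retic_parent by blast
  ultimately show ?thesis by simp
qed

text \<open>As \<open>i\<close> is the only proper descendant of \<open>parent A i\<close>, cutting its arc from \<open>parent A j\<close>
  only destroys paths to \<open>i\<close>.\<close>

lemma npaths_retic_cut:
  assumes "u \<in> V" "v \<in> V" "v \<noteq> parent A i"
  shows "npaths V (A - {#(parent A j, parent A i)#}) u v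
    = npaths V A u v - (if v = i then npaths V A u (parent A j) else 0)"
proof -
  let ?r = "parent A i" and ?t = "parent A j" and ?A0 = "A - {#(parent A j, parent A i)#}"
  have dag: "finite_dag V A" using pn by (rule finite_dag_if_phylo_network)
  have tr: "count A (?t, ?r) = 1" using retic_cherry_parents(1,6) by simp
  have t: "?t \<in> V" "?t \<noteq> ?r" "?t \<noteq> i" using retic_cherry_parents(2) by auto
  have "npaths V A u ?t = npaths V ?A0 u ?t"
    using npaths_remove_arc[OF dag tr assms(1) t(1)] npaths_from_retic_parent_cut[OF t(2)] t(3)
    by simp
  then show ?thesis
    using npaths_remove_arc[OF dag tr assms(1,2)] npaths_from_retic_parent_cut[OF assms(3)] by simp
qed

lemma npaths_from_retic_tree_parent:
  "npaths V A (parent A j) y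
    = (if y \<in> {i, j, parent A i, parent A j} then 1 else 0)"
proof -
  let ?r = "parent A i" and ?t = "parent A j" and ?A0 = "A - {#(parent A j, parent A i)#}"
  note par = retic_cherry_parents and lv = retic_cherry_leaves
  have dag: "finite_dag V A" using pn by (rule finite_dag_if_phylo_network)
  have t: "?t \<in> V" "?t \<noteq> ?r" "?t \<noteq> i" "?t \<noteq> j" and r: "?r \<in> V" "?r \<noteq> i"
    using par(1,2) by auto
  have reach: "y \<in> {?t, j, ?r, i}" if "(?t, y) \<in> (set_mset A)\<^sup>*" for y
    using that
  proof (cases rule: converse_rtranclE)
    case (step c)
    then have "count A (?t, c) \<noteq> 0" by simp
    then have "c = j \<or> c = ?r" using par(6)[of c] by (simp split: if_splits)
    then show ?thesis using step rtrancl_from_leaf[OF lv(6)] rtrancl_from_retic_parent by blast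
  qed simp
  have reach0: "y \<in> {?t, j}" if "(?t, y) \<in> (set_mset ?A0)\<^sup>*" for y
    using that
  proof (cases rule: converse_rtranclE)
    case (step c)
    from step(1) have "0 < count ?A0 (?t, c)" by (simp only: count_greater_zero_iff)
    then have "c = j" using par(6)[of c] by (auto split: if_splits)
    moreover have "outdeg ?A0 j = 0"
      using lv(6) t(4) par(6)[of ?r] by (simp add: outdeg_remove1 count_inI)
    ultimately show ?thesis using step rtrancl_from_leaf by blast
  qed simp
  have "(?t, ?r) \<notin> (set_mset ?A0)\<^sup>*" using reach0[of ?r] t(2) par(1) by auto
  then have "npaths V ?A0 ?t ?r = 0" using npaths_nonzero_imp_rtrancl[of V ?A0 ?t ?r] by auto
  then have "npaths V A ?t ?r = 1"
    using npaths_remove_arc[OF dag _ t(1) r(1)] par(1) par(6)[of ?r] npaths_self t(1) r(1) by simp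
  moreover have "npaths V A ?t i = npaths V A ?t ?r" "npaths V A ?t j = npaths V A ?t ?t"
    using npaths_eq_npaths_parent[OF dag t(1) lv(1) t(3) lv(2)]
      npaths_eq_npaths_parent[OF dag t(1) lv(4) t(4) lv(5)] by simp_all
  moreover have "npaths V A ?t y = 0" if "y \<notin> {?t, j, ?r, i}" for y
    using that reach npaths_nonzero_imp_rtrancl by blast
  ultimately show ?thesis using npaths_self[OF t(1)] by auto
qed

lemma mu_retic_tree_parent: "mu n V A (parent A j) = delta {0, i, j}"
proof
  fix k
  let ?r = "parent A i" and ?t = "parent A j"
  have fin: "finite (VH V A)" using pn by (simp add: phylo_network_def VH_def)
  note types = retic_node_types
  have "(\<Sum>h\<in>VH V A - {?r}. npaths V A ?t h) = 0"
    using types by (intro sum.neutral) (auto simp: npaths_from_retic_tree_parent)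
  then have "(\<Sum>h\<in>VH V A. npaths V A ?t h) = 1"
    using sum.remove[OF fin types(1), of "npaths V A ?t"]
    by (simp add: npaths_from_retic_tree_parent)
  moreover have "i \<in> leaves V A" "j \<in> leaves V A" using rc by (auto simp: is_retic_cherry_def)
  ultimately show "mu n V A ?t k = delta {0, i, j} k"
    using types retic_cherry_leaves by (auto simp: mu_def delta_def npaths_from_retic_tree_parent)
qed

lemma retic_reduce_node_classes:
  "VT (fst (retic_reduce V A i j)) (snd (retic_reduce V A i j)) = VT V A - {parent A j}"
  "VH (fst (retic_reduce V A i j)) (snd (retic_reduce V A i j)) = VH V A - {parent A i}"
  "leaves (fst (retic_reduce V A i j)) (snd (retic_reduce V A i j)) = leaves V A"
proof -
  let ?V' = "fst (retic_reduce V A i j)" and ?A' = "snd (retic_reduce V A i j)"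
  have sub: "?V' \<subseteq> V" using retic_reduce_network(1) by auto
  have "VT ?V' ?A' = VT V A \<inter> ?V'" "VH ?V' ?A' = VH V A \<inter> ?V'" "leaves ?V' ?A' = leaves V A \<inter> ?V'"
    using node_classes_eq_if_same_degrees[OF sub retic_reduce_network(2)] by blast+
  then show "VT ?V' ?A' = VT V A - {parent A j}" "VH ?V' ?A' = VH V A - {parent A i}"
    "leaves ?V' ?A' = leaves V A"
    using retic_reduce_network(1) retic_node_types by (auto simp: VT_def VH_def leaves_def)
qed

lemma npaths_retic_reduce:
  assumes "u \<in> V - {parent A i, parent A j}" "v \<in> V - {parent A i, parent A j}"
  shows "npaths (fst (retic_reduce V A i j)) (snd (retic_reduce V A i j)) u v
    = npaths V A u v - (if v = i then npaths V A u (parent A j) else 0)"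
  using assms retic_reduce_network(1) retic_reduce_network(3)[of u v] npaths_retic_cut[of u v]
  by auto

text \<open>For \<open>u = i\<close> and \<open>u = j\<close> the following two identities hold only thanks to truncated
  subtraction: both sides vanish.\<close>

lemma mu_retic_reduce_0:
  assumes u: "u \<in> V - {parent A i, parent A j}"
  shows "mu n (fst (retic_reduce V A i j)) (snd (retic_reduce V A i j)) u 0
    = mu n V A u 0 - mu n V A u i"
proof -
  let ?V' = "fst (retic_reduce V A i j)" and ?A' = "snd (retic_reduce V A i j)"
  let ?r = "parent A i" and ?S = "\<Sum>h\<in>VH V A - {parent A i}. npaths V A u h"
  note types = retic_node_types and lv = retic_cherry_leaves
  have fin: "finite (VH V A)" using pn by (simp add: phylo_network_def VH_def)
  have "mu n ?V' ?A' u 0 = (\<Sum>h\<in>VH V A - {?r}. npaths ?V' ?A' u h)"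
    by (simp add: mu_def retic_reduce_node_classes)
  also have "\<dots> = ?S"
  proof (rule sum.cong[OF refl])
    fix h assume "h \<in> VH V A - {?r}"
    then have "h \<in> V - {?r, parent A j}" "h \<noteq> i" using types by (auto simp: VH_def)
    then show "npaths ?V' ?A' u h = npaths V A u h" using npaths_retic_reduce[OF u] by simp
  qed
  finally have "mu n ?V' ?A' u 0 = ?S" .
  moreover have "mu n V A u 0 = npaths V A u ?r + ?S"
    by (simp add: mu_def sum.remove[OF fin types(1)])
  moreover have "?S = 0" "npaths V A u ?r = 0" if "u = i"
    using that lv(1,3) types by (auto simp: npaths_from_leaf intro!: sum.neutral split: if_splits)
  moreover have "npaths V A u i = npaths V A u ?r" if "u \<noteq> i"
    using u npaths_eq_npaths_parent[OF finite_dag_if_phylo_network[OF pn] _ lv(1) that lv(2)]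
    by simp
  moreover have "i \<in> leaves V A" using rc by (simp add: is_retic_cherry_def)
  ultimately show ?thesis using lv by (cases "u = i") (auto simp: mu_def)
qed

lemma mu_retic_reduce_i:
  assumes u: "u \<in> V - {parent A i, parent A j}"
  shows "mu n (fst (retic_reduce V A i j)) (snd (retic_reduce V A i j)) u i
    = mu n V A u i - mu n V A u j"
proof -
  note lv = retic_cherry_leaves
  have "npaths V A u j = npaths V A u (parent A j)" if "u \<noteq> j"
    using u npaths_eq_npaths_parent[OF finite_dag_if_phylo_network[OF pn] _ lv(4) that lv(5)]
    by simp
  moreover have "i \<in> leaves V A" "j \<in> leaves V A" using rc by (auto simp: is_retic_cherry_def)
  ultimately show ?thesis
    using u npaths_retic_reduce[OF u, of i] lv retic_cherry_parents(1,2)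
      npaths_from_leaf[OF lv(4,6)]
    by (cases "u = j") (auto simp: mu_def retic_reduce_node_classes)
qed

lemma mu_retic_reduce:
  assumes u: "u \<in> V - {parent A i, parent A j}"
  shows "mu n (fst (retic_reduce V A i j)) (snd (retic_reduce V A i j)) u
    = (\<lambda>k. mu n V A u k - mu n V A u i * delta {0} k - mu n V A u j * delta {i} k)"
proof
  fix k
  let ?V' = "fst (retic_reduce V A i j)" and ?A' = "snd (retic_reduce V A i j)"
  have "npaths ?V' ?A' u k = npaths V A u k" if "k \<in> leaves V A" "k \<noteq> i"
    using that npaths_retic_reduce[OF u, of k] retic_node_types by (auto simp: leaves_def)
  then have "mu n ?V' ?A' u k = mu n V A u k" if "k \<noteq> 0" "k \<noteq> i"
    using that by (simp add: mu_def retic_reduce_node_classes)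
  then show "mu n ?V' ?A' u k
      = mu n V A u k - mu n V A u i * delta {0} k - mu n V A u j * delta {i} k"
    using mu_retic_reduce_0[OF u] mu_retic_reduce_i[OF u] retic_cherry_leaves(8)
    by (auto simp: delta_def)
qed

lemma mu_multiset_retic_reduce:
  "mu_multiset n (fst (retic_reduce V A i j)) (snd (retic_reduce V A i j))
    = retic_red_ms (mu_multiset n V A) i j"
proof -
  let ?V' = "fst (retic_reduce V A i j)" and ?A' = "snd (retic_reduce V A i j)"
  let ?g = "\<lambda>m k. m k - m i * delta {0} k - m j * delta {i} k"
  have fin: "finite (VT V A)" using pn by (simp add: phylo_network_def VT_def)
  have t: "{parent A j} \<subseteq> VT V A" using retic_node_types by simp
  have "mu_multiset n ?V' ?A' = image_mset (mu n ?V' ?A') (mset_set (VT V A - {parent A j}))"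
    by (simp add: mu_multiset_def retic_reduce_node_classes(1))
  also have "\<dots> = image_mset ?g (mu_multiset n V A - image_mset (mu n V A) (mset_set {parent A j}))"
    unfolding mu_multiset_def
  proof (rule image_mset_mset_set_Diff[OF fin t])
    fix x assume "x \<in> VT V A - {parent A j}"
    then have "x \<in> V - {parent A i, parent A j}" using retic_node_types by (auto simp: VT_def)
    then show "mu n ?V' ?A' x = ?g (mu n V A x)" by (simp add: mu_retic_reduce)
  qed
  finally show ?thesis by (simp add: retic_red_ms_def mu_retic_tree_parent)
qed

end

theorem mainTheorem7:
  fixes n :: nat and V X :: "nat set" and A :: "(nat \<times> nat) multiset" and i j :: nat
  assumes "phylo_network n V A X"
    and "is_cherry V A i j \<or> is_retic_cherry V A i j"
  shows "mu_multiset n (fst (net_reduce V A i j)) (snd (net_reduce V A i j))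
           = mu_reduce V A i j (mu_multiset n V A)"
  using assms mu_multiset_cherry_reduce mu_multiset_retic_reduce
  by (auto simp: net_reduce_def mu_reduce_def)

end
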